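(* Let $\mathbb{K}$ be a computable field, $n>1$, $a=\sum_{j=0}^d c_j s^j\in\mathbb{K}[s]^n$ a non-zero row vector of degree $d$, and let $M\in\mathbb{K}[s]^{n\times(n-1)}$ be the output of the $\mu$-Basis Algorithm (described in the context) on input $a$. Then the columns of $M$ form a $\mu$-basis of $a$.
   Context: $\mu$-Basis Algorithm: (1) Form $A\in\mathbb{K}^{(2d+1)\times n(d+1)}$ whose $(i,\,kn+r)$ entry ($1\le i\le 2d+1$, $0\le k\le d$, $1\le r\le n$) is the $r$-th entry of the row vector $c_{i-1-k}$ (zero if $i-1-k\notin\{0,\dots,d\}$). (2) Compute (possibly only partially, on the relevant columns) the reduced row-echelon form $E$ of $A$; let $p=(p_1<p_2<\dots)$ be the list of pivotal column indices and $\tilde q=(\tilde q_1,\dots,\tilde q_{n-1})$ the list of basic non-pivotal indices. Here a column is pivotal if it is the first column and non-zero or is linearly independent of previous columns, otherwise non-pivotal; with $q$ the set of non-pivotal indices, $\tilde q$ consists of the minimal elements of the classes of $q$ modulo $n$. (3) Initialize $M$ as the $n\times(n-1)$ zero matrix; for each $j=1,\dots,n-1$, with $r=\mathrm{rem}(\tilde q_j-1,n)+1$ and $k=\mathrm{quo}(\tilde q_j-1,n)$, add $s^k$ to $M_{r,j}$; then for each $i=1,\dots,|p|$, with $r=\mathrm{rem}(p_i-1,n)+1$, $k=\mathrm{quo}(p_i-1,n)$, and each $j=1,\dots,n-1$, subtract $E_{i,\tilde q_j}s^k$ from $M_{r,j}$. Output $M$. Definitions: $\mathrm{syz}(a)=\{h\in\mathbb{K}[s]^n\mid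 a\,h=0\}$; for non-zero $h\in\mathbb{K}[s]^n$, $LV(h)$ is the vector of coefficients of $s^{\deg h}$ in its entries, $\deg h=\max_i\deg h_i$. A set $u=\{u_1,\dots,u_{n-1}\}\subset\mathbb{K}[s]^n$ is a $\mu$-basis of $a$ if it has exactly $n-1$ elements, $LV(u_1),\dots,LV(u_{n-1})$ are linearly independent over $\mathbb{K}$, and $u$ is a basis of the $\mathbb{K}[s]$-module $\mathrm{syz}(a)$. *)

theory Defs
  imports "HOL-Computational_Algebra.Polynomial" "Jordan_Normal_Form.Gauss_Jordan_Elimination"
begin

text \<open>All row/column indices below are 0-based (the paper uses 1-based ones).
  A polynomial row vector a in K[s]^n is a vector of dimension n of polynomials.\<close>

definition vdeg :: "'k::zero poly vec \<Rightarrow> nat" where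
  "vdeg h = Max (insert 0 {degree (h $ i) | i. i < dim_vec h})"

definition LV :: "'k::zero poly vec \<Rightarrow> 'k vec" where
  "LV h = vec (dim_vec h) (\<lambda>i. coeff (h $ i) (vdeg h))"

definition syz :: "'k::comm_ring_1 poly vec \<Rightarrow> 'k poly vec set" where
  "syz a = {h \<in> carrier_vec (dim_vec a). a \<bullet> h = 0}"

text \<open>The coefficient matrix A (step 1): entry (i, k*n + r) is the r-th entry of c_(i-k),
  i.e. the coefficient of s^(i-k) in a_r, zero if i-k is not in {0..d}.\<close>
definition coeff_matrix :: "'k::field poly vec \<Rightarrow> 'k mat" where
  "coeff_matrix a = (let n = dim_vec a; d = vdeg a in
     mat (2*d+1) (n*(d+1)) (\<lambda>(i,c). let k = c div n; r = c mod n in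
        if k \<le> i \<and> i - k \<le> d then coeff (a $ r) (i - k) else 0))"

definition pivotal :: "'k::field mat \<Rightarrow> nat \<Rightarrow> bool" where
  "pivotal A c \<longleftrightarrow> c < dim_col A \<and>
     \<not> (\<exists>f. col A c = finsum_vec TYPE('k) (dim_row A) (\<lambda>c'. f c' \<cdot>\<^sub>v col A c') {..<c})"

definition pivots :: "'k::field mat \<Rightarrow> nat list" where
  "pivots A = sorted_list_of_set {c. pivotal A c}"

definition nonpivots :: "'k::field mat \<Rightarrow> nat set" where
  "nonpivots A = {c. c < dim_col A \<and> \<not> pivotal A c}"

definition basic_nonpivots :: "'k::field mat \<Rightarrow> nat \<Rightarrow> nat list" where
  "basic_nonpivots A n = sorted_list_of_set
     {x \<in> nonpivots A. \<forall>y \<in> nonpivots A. y mod n = x mod n \<longrightarrow> x \<le> y}"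

definition mu_basis_alg :: "'k::field poly vec \<Rightarrow> 'k poly mat" where
  "mu_basis_alg a = (let n = dim_vec a; A = coeff_matrix a; E = gauss_jordan_single A;
      p = pivots A; q = basic_nonpivots A n in
      mat n (n - 1) (\<lambda>(r,j).
        (if q ! j mod n = r then monom 1 (q ! j div n) else 0)
        - (\<Sum>i<length p. if p ! i mod n = r then monom (E $$ (i, q ! j)) (p ! i div n) else 0)))"

definition is_mu_basis :: "'k::field poly vec \<Rightarrow> (nat \<Rightarrow> 'k poly vec) \<Rightarrow> bool" where
  "is_mu_basis a u \<longleftrightarrow> (let n = dim_vec a in
     \<comment> \<open>exactly n-1 elements, all non-zero\<close>
     inj_on u {..<n-1} \<and> (\<forall>j<n-1. u j \<in> carrier_vec n \<and> u j \<noteq> 0\<^sub>v n) \<and>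
     \<comment> \<open>leading vectors linearly independent over K\<close>
     (\<forall>g::nat \<Rightarrow> 'k. finsum_vec TYPE('k) n (\<lambda>j. g j \<cdot>\<^sub>v LV (u j)) {..<n-1} = 0\<^sub>v n
        \<longrightarrow> (\<forall>j<n-1. g j = 0)) \<and>
     \<comment> \<open>basis of the K[s]-module syz(a)\<close>
     (\<forall>j<n-1. u j \<in> syz a) \<and>
     (\<forall>h \<in> syz a. \<exists>g::nat \<Rightarrow> 'k poly.
        h = finsum_vec TYPE('k poly) n (\<lambda>j. g j \<cdot>\<^sub>v u j) {..<n-1}) \<and>
     (\<forall>g::nat \<Rightarrow> 'k poly. finsum_vec TYPE('k poly) n (\<lambda>j. g j \<cdot>\<^sub>v u j) {..<n-1} = 0\<^sub>v n
        \<longrightarrow> (\<forall>j<n-1. g j = 0)))"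

end

(*
  Order the K-basis s^k e_r of K[s]^n by c = k n + r, as the columns of the coefficient
  matrix A; the coefficient of h at c is its flat coefficient, and the largest such c with
  a non-zero coefficient is the leading index of h, which determines deg h = c div n.

  The kernel of A is the space of syzygies of degree at most d, and a column is
  non-pivotal iff it is the leading index of such a syzygy. The columns u_j of M are the
  kernel vectors of the reduced echelon form at the basic non-pivotal indices q_j, so u_j
  is a monic syzygy with leading index q_j, and the q_j have pairwise distinct residues
  mod n. Every syzygy has a leading index dominating some q_j in its residue class:
  inside the window because the leading index is then non-pivotal, and beyond it because
  the Koszul syzygies a_m e_r - a_r e_m provide the non-pivotal index d n + r for every
  residue r other than the first position m at which a attains its degree, a residue no
  syzygy can have.

  Distinct residues make the leading vectors of the u_j, and every non-trivial K[s]-linear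
  combination of them, non-vanishing; domination runs a division algorithm expressing
  every syzygy in terms of the u_j.
*)

theory Submission
  imports Defs
begin

lemma sum_eq_single:
  assumes "finite A" "x \<in> A" "\<And>y. y \<in> A \<Longrightarrow> y \<noteq> x \<Longrightarrow> f y = 0"
  shows "sum f A = (f x :: 'a::comm_monoid_add)"
  using sum.mono_neutral_right[of A "{x}" f] assms by auto

lemma finsum_vec_smult_eq:
  fixes u :: "nat \<Rightarrow> 'a::comm_ring_1 vec"
  assumes "finite J" "\<And>j. j \<in> J \<Longrightarrow> u j \<in> carrier_vec n"
  shows "finsum_vec TYPE('a) n (\<lambda>j. g j \<cdot>\<^sub>v u j) J = vec n (\<lambda>i. \<Sum>j\<in>J. g j * u j $ i)"
proof -
  have "finsum_vec TYPE('a) n (\<lambda>j. g j \<cdot>\<^sub>v u j) J \<in> carrier_vec n"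
    by (rule finsum_vec_closed) (use assms in auto)
  then show ?thesis
    by (intro eq_vecI)
      (use assms in \<open>auto simp: index_finsum_vec carrier_vecD[OF assms(2)] intro!: sum.cong\<close>)
qed

lemma sum_distinct_lead_indices_nonzero:
  fixes f :: "'j \<Rightarrow> nat \<Rightarrow> 'a::comm_monoid_add"
  assumes "finite S" "S \<noteq> {}" "inj_on l S"
    and "\<And>j. j \<in> S \<Longrightarrow> f j (l j) \<noteq> 0"
    and "\<And>j c. j \<in> S \<Longrightarrow> l j < c \<Longrightarrow> f j c = 0"
  shows "(\<Sum>j\<in>S. f j (Max (l ` S))) \<noteq> 0"
proof -
  have "Max (l ` S) \<in> l ` S" using assms(1,2) by simp
  then obtain j0 where j0: "j0 \<in> S" "l j0 = Max (l ` S)" by auto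
  have "l j < l j0" if "j \<in> S" "j \<noteq> j0" for j
  proof -
    have "l j \<le> l j0" using Max_ge[of "l ` S" "l j"] j0(2) that(1) assms(1) by simp
    moreover have "l j \<noteq> l j0" using inj_onD[OF assms(3), of j j0] j0(1) that by blast
    ultimately show ?thesis by simp
  qed
  then have "(\<Sum>j\<in>S. f j (Max (l ` S))) = f j0 (l j0)"
    by (subst sum_eq_single[OF assms(1) j0(1)]) (auto simp: j0(2)[symmetric] assms(5))
  with assms(4)[OF j0(1)] show ?thesis by simp
qed

section \<open>Flat coefficients and leading indices\<close>

definition flat_coeff :: "nat \<Rightarrow> 'k::zero poly vec \<Rightarrow> nat \<Rightarrow> 'k" where
  "flat_coeff n h c = coeff (h $ (c mod n)) (c div n)"

definition is_lead_index :: "nat \<Rightarrow> 'k::zero poly vec \<Rightarrow> nat \<Rightarrow> bool" where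
  "is_lead_index n h c \<longleftrightarrow> flat_coeff n h c \<noteq> 0 \<and> (\<forall>c'>c. flat_coeff n h c' = 0)"

lemma flat_coeff_mult_add: "r < n \<Longrightarrow> flat_coeff n h (k * n + r) = coeff (h $ r) k"
  by (simp add: flat_coeff_def)

lemma flat_coeff_eqI:
  assumes "h \<in> carrier_vec n" "h' \<in> carrier_vec n" "\<And>c. flat_coeff n h c = flat_coeff n h' c"
  shows "h = h'"
proof (rule eq_vecI)
  fix r assume "r < dim_vec h'"
  with assms(2) have r: "r < n" by simp
  show "h $ r = h' $ r"
    by (rule poly_eqI) (use assms(3)[of "_ * n + r"] in \<open>simp add: flat_coeff_mult_add[OF r]\<close>)
qed (use assms in auto)

lemma flat_coeff_zero_vec [simp]: "n > 0 \<Longrightarrow> flat_coeff n (0\<^sub>v n) c = 0"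
  by (simp add: flat_coeff_def)

lemma flat_coeff_diff:
  "h \<in> carrier_vec n \<Longrightarrow> w \<in> carrier_vec n \<Longrightarrow> n > 0 \<Longrightarrow>
    flat_coeff n (h - w) c = flat_coeff n h c - flat_coeff n (w :: 'k::ab_group_add poly vec) c"
  by (simp add: flat_coeff_def)

lemma is_lead_index_unique: "is_lead_index n h c \<Longrightarrow> is_lead_index n h c' \<Longrightarrow> c = c'"
  unfolding is_lead_index_def by (metis linorder_neqE_nat)

lemma le_vdeg: "i < dim_vec h \<Longrightarrow> degree (h $ i) \<le> vdeg h"
  unfolding vdeg_def by (rule Max_ge) auto

lemma flat_coeff_eq_0:
  assumes "h \<in> carrier_vec n" "n > 0" "n * Suc (vdeg h) \<le> c"
  shows "flat_coeff n h c = 0"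
proof -
  have "Suc (vdeg h) \<le> c div n"
    using assms(2,3) by (simp add: less_eq_div_iff_mult_less_eq mult.commute)
  moreover have "degree (h $ (c mod n)) \<le> vdeg h" using assms(1,2) by (simp add: le_vdeg)
  ultimately show ?thesis unfolding flat_coeff_def by (simp add: coeff_eq_0)
qed

lemma is_lead_index_exists:
  assumes h: "h \<in> carrier_vec n" and nz: "h \<noteq> 0\<^sub>v n"
  obtains c where "is_lead_index n h c"
proof -
  from h nz obtain r where r: "r < n" "h $ r \<noteq> 0" by (auto simp: vec_eq_iff)
  let ?S = "{c. flat_coeff n h c \<noteq> 0}"
  have "?S \<subseteq> {..< n * Suc (vdeg h)}"
    using flat_coeff_eq_0[OF h] r(1) by (auto simp: not_less[symmetric])
  then have fin: "finite ?S" by (rule finite_subset) simp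
  have "degree (h $ r) * n + r \<in> ?S" using r by (simp add: flat_coeff_mult_add)
  then have "is_lead_index n h (Max ?S)"
    unfolding is_lead_index_def using Max_in[OF fin] Max_ge[OF fin] by (auto simp: not_le[symmetric])
  then show thesis by (rule that)
qed

lemma vdeg_eq_lead_index_div:
  assumes h: "h \<in> carrier_vec n" and l: "is_lead_index n h c" and n: "n > 0"
  shows "vdeg h = c div n"
proof -
  have le: "degree (h $ i) \<le> c div n" if i: "i < n" for i
  proof (rule degree_le, intro allI impI)
    fix k assume "c div n < k"
    then have "c < k * n + i" using div_less_iff_less_mult[OF n] by (simp add: trans_less_add1)
    then show "coeff (h $ i) k = 0" using l flat_coeff_mult_add[OF i, of h k] unfolding is_lead_index_def by auto
  qed
  have "c div n \<le> degree (h $ (c mod n))"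
    using l unfolding is_lead_index_def flat_coeff_def by (simp add: le_degree)
  with le[of "c mod n"] n have "degree (h $ (c mod n)) = c div n" by simp
  moreover have "c mod n < n" using n by simp
  ultimately show ?thesis
    using h le unfolding vdeg_def by (intro antisym Max.boundedI Max_ge) force+
qed

lemma LV_nth_lead_index:
  assumes "h \<in> carrier_vec n" "is_lead_index n h c" "n > 0" "i < n"
  shows "LV h $ i = flat_coeff n h (c div n * n + i)"
  using vdeg_eq_lead_index_div[OF assms(1-3)] assms unfolding LV_def by (simp add: flat_coeff_mult_add)

lemma flat_coeff_smult:
  assumes h: "h \<in> carrier_vec n" and n: "n > 0"
  shows "flat_coeff n (g \<cdot>\<^sub>v h) c = (\<Sum>i\<le>c div n. coeff g i * flat_coeff n h (c - i * n))"
proof -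
  have "c - i * n = (c div n - i) * n + c mod n" if "i \<le> c div n" for i
    using that by (metis add_diff_assoc2 diff_mult_distrib div_mult_mod_eq mult_le_mono1)
  then show ?thesis
    unfolding flat_coeff_def using h n by (simp add: coeff_mult)
qed

lemma is_lead_index_smult:
  fixes h :: "'k::field poly vec"
  assumes h: "h \<in> carrier_vec n" and n: "n > 0" and l: "is_lead_index n h c" and g: "g \<noteq> 0"
  shows "is_lead_index n (g \<cdot>\<^sub>v h) (degree g * n + c)"
    and "flat_coeff n (g \<cdot>\<^sub>v h) (degree g * n + c) = lead_coeff g * flat_coeff n h c"
proof -
  let ?D = "degree g * n + c"
  have term0: "coeff g i * flat_coeff n h (c' - i * n) = 0"
    if "?D \<le> c'" "i \<le> c' div n" "?D < c' \<or> i \<noteq> degree g" for c' i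
  proof (rule ccontr)
    assume "coeff g i * flat_coeff n h (c' - i * n) \<noteq> 0"
    then have "i \<le> degree g" "c' - i * n \<le> c"
      using l unfolding is_lead_index_def by (auto intro: le_degree simp: not_le[symmetric])
    moreover have "i * n \<le> c'" using that(2) by (metis div_times_less_eq_dividend le_trans mult_le_mono1)
    ultimately have "c' = ?D" "i * n = degree g * n"
      using that(1) mult_le_mono1[of i "degree g" n] by linarith+
    with that(3) n show False by simp
  qed
  have val: "flat_coeff n (g \<cdot>\<^sub>v h) ?D = lead_coeff g * flat_coeff n h c"
    unfolding flat_coeff_smult[OF h n]
    by (subst sum_eq_single[of _ "degree g"]) (use n term0 in auto)
  then show "flat_coeff n (g \<cdot>\<^sub>v h) ?D = lead_coeff g * flat_coeff n h c" .
  show "is_lead_index n (g \<cdot>\<^sub>v h) ?D"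
    unfolding is_lead_index_def
  proof (intro conjI allI impI)
    show "flat_coeff n (g \<cdot>\<^sub>v h) ?D \<noteq> 0" using val l g unfolding is_lead_index_def by simp
  next
    fix c' assume "?D < c'"
    then show "flat_coeff n (g \<cdot>\<^sub>v h) c' = 0"
      unfolding flat_coeff_smult[OF h n] by (intro sum.neutral) (use term0 in auto)
  qed
qed

section \<open>A criterion for \<mu>-bases\<close>

lemma syz_carrier: "h \<in> syz a \<Longrightarrow> h \<in> carrier_vec (dim_vec a)"
  unfolding syz_def by simp

lemma syz_diff_smult:
  fixes a :: "'k::comm_ring_1 poly vec"
  assumes h: "h \<in> syz a" and u: "u \<in> syz a"
  shows "h - t \<cdot>\<^sub>v u \<in> syz a"
proof -
  have "h \<in> carrier_vec (dim_vec a)" "u \<in> carrier_vec (dim_vec a)"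
    using h u by (auto simp: syz_def)
  moreover from this have "a \<bullet> (h - t \<cdot>\<^sub>v u) = a \<bullet> h - t * (a \<bullet> u)"
    by (subst scalar_prod_minus_distrib[of _ "dim_vec a"]) auto
  ultimately show ?thesis using h u by (simp add: syz_def)
qed

lemma flat_coeff_lincomb:
  fixes u :: "nat \<Rightarrow> 'k::comm_ring_1 poly vec"
  assumes "n > 0" "finite J" "\<And>j. j \<in> J \<Longrightarrow> u j \<in> carrier_vec n"
  shows "flat_coeff n (finsum_vec TYPE('k poly) n (\<lambda>j. g j \<cdot>\<^sub>v u j) J) c
    = (\<Sum>j\<in>J. flat_coeff n (g j \<cdot>\<^sub>v u j) c)"
proof -
  have idx: "finsum_vec TYPE('k poly) n (\<lambda>j. g j \<cdot>\<^sub>v u j) J $ (c mod n)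
      = (\<Sum>j\<in>J. (g j \<cdot>\<^sub>v u j) $ (c mod n))"
    by (rule index_finsum_vec) (use assms in \<open>auto simp: Pi_def\<close>)
  show ?thesis unfolding flat_coeff_def idx coeff_sum ..
qed

lemma LV_carrier: "h \<in> carrier_vec n \<Longrightarrow> LV h \<in> carrier_vec n"
  unfolding LV_def by (simp add: carrier_vecD)

lemma LV_lincomb_eq_zero_imp:
  fixes u :: "nat \<Rightarrow> 'k::field poly vec"
  assumes n: "n > 0"
    and u: "\<And>j. j < m \<Longrightarrow> u j \<in> carrier_vec n"
    and lead: "\<And>j. j < m \<Longrightarrow> is_lead_index n (u j) (q j)"
    and inj: "inj_on (\<lambda>j. q j mod n) {..<m}"
    and zero: "finsum_vec TYPE('k) n (\<lambda>j. g j \<cdot>\<^sub>v LV (u j)) {..<m} = 0\<^sub>v n"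
  shows "\<forall>j<m. g j = 0"
proof (rule ccontr)
  define S where "S = {j. j < m \<and> g j \<noteq> 0}"
  define f where "f j r = (if r < n then g j * LV (u j) $ r else 0)" for j r
  assume "\<not> (\<forall>j<m. g j = 0)"
  then have S: "finite S" "S \<noteq> {}" "S \<subseteq> {..<m}" by (auto simp: S_def)
  have LV_u: "LV (u j) $ r = flat_coeff n (u j) (q j div n * n + r)" if "j < m" "r < n" for j r
    using LV_nth_lead_index[OF u lead n] that by blast
  have "(\<Sum>j\<in>S. f j (Max ((\<lambda>j. q j mod n) ` S))) \<noteq> 0"
  proof (rule sum_distinct_lead_indices_nonzero[OF S(1,2)])
    show "inj_on (\<lambda>j. q j mod n) S" using inj S(3) by (rule inj_on_subset)
    fix j assume j: "j \<in> S"
    with S(3) have jm: "j < m" by auto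
    show "f j (q j mod n) \<noteq> 0"
      using j lead[OF jm] n LV_u[OF jm, of "q j mod n"] by (simp add: f_def S_def is_lead_index_def)
    fix r assume "q j mod n < r"
    then have "q j < q j div n * n + r" by (metis add_less_cancel_left div_mult_mod_eq)
    then show "f j r = 0" using lead[OF jm] LV_u[OF jm] by (simp add: f_def is_lead_index_def)
  qed
  moreover have "(\<Sum>j\<in>S. f j r) = 0" if "r < n" for r
  proof -
    have "(\<Sum>j\<in>S. f j r) = (\<Sum>j<m. g j * LV (u j) $ r)"
      using S(3) \<open>r < n\<close> by (intro sum.mono_neutral_cong_left) (auto simp: f_def S_def)
    also have "\<dots> = finsum_vec TYPE('k) n (\<lambda>j. g j \<cdot>\<^sub>v LV (u j)) {..<m} $ r"
      using \<open>r < n\<close> LV_carrier[OF u] by (subst finsum_vec_smult_eq) auto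
    also have "\<dots> = 0" using zero \<open>r < n\<close> by simp
    finally show ?thesis .
  qed
  moreover have "Max ((\<lambda>j. q j mod n) ` S) < n" using S n by simp
  ultimately show False by blast
qed

lemma lincomb_eq_zero_imp:
  fixes u :: "nat \<Rightarrow> 'k::field poly vec"
  assumes n: "n > 0"
    and u: "\<And>j. j < m \<Longrightarrow> u j \<in> carrier_vec n"
    and lead: "\<And>j. j < m \<Longrightarrow> is_lead_index n (u j) (q j)"
    and inj: "inj_on (\<lambda>j. q j mod n) {..<m}"
    and zero: "finsum_vec TYPE('k poly) n (\<lambda>j. g j \<cdot>\<^sub>v u j) {..<m} = 0\<^sub>v n"
  shows "\<forall>j<m. g j = 0"
proof (rule ccontr)
  define S where "S = {j. j < m \<and> g j \<noteq> 0}"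
  define l where "l j = degree (g j) * n + q j" for j
  have ud: "dim_vec (u j) = n" if "j < m" for j using u[OF that] by simp
  assume "\<not> (\<forall>j<m. g j = 0)"
  then have S: "finite S" "S \<noteq> {}" "S \<subseteq> {..<m}" by (auto simp: S_def)
  have nonzero: "(\<Sum>j\<in>S. flat_coeff n (g j \<cdot>\<^sub>v u j) (Max (l ` S))) \<noteq> 0"
  proof (rule sum_distinct_lead_indices_nonzero[OF S(1,2)])
    have "inj_on (\<lambda>j. l j mod n) S" unfolding l_def using inj S(3) by (simp add: inj_on_subset)
    then show "inj_on l S" by (metis (mono_tags, lifting) inj_on_def)
    fix j assume j: "j \<in> S"
    with S(3) have "is_lead_index n (g j \<cdot>\<^sub>v u j) (l j)"
      unfolding l_def by (intro is_lead_index_smult u lead n) (auto simp: S_def)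
    then show "flat_coeff n (g j \<cdot>\<^sub>v u j) (l j) \<noteq> 0"
      and "\<And>c. l j < c \<Longrightarrow> flat_coeff n (g j \<cdot>\<^sub>v u j) c = 0"
      by (auto simp: is_lead_index_def)
  qed
  have vanish: "(\<Sum>j\<in>S. flat_coeff n (g j \<cdot>\<^sub>v u j) c) = 0" for c
  proof -
    have "(\<Sum>j\<in>S. flat_coeff n (g j \<cdot>\<^sub>v u j) c) = (\<Sum>j<m. flat_coeff n (g j \<cdot>\<^sub>v u j) c)"
      using S(3) n u by (intro sum.mono_neutral_left) (auto simp: S_def flat_coeff_def ud)
    also have "\<dots> = flat_coeff n (finsum_vec TYPE('k poly) n (\<lambda>j. g j \<cdot>\<^sub>v u j) {..<m}) c"
      using flat_coeff_lincomb[OF n, of "{..<m}" u g c] u by simp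
    also have "\<dots> = 0" using zero n by simp
    finally show ?thesis .
  qed
  from nonzero show False by (simp add: vanish)
qed

lemma lead_index_reduction:
  fixes h u :: "'k::field poly vec"
  assumes n: "n > 0" and h: "h \<in> carrier_vec n" and u: "u \<in> carrier_vec n"
    and lh: "is_lead_index n h c" and lu: "is_lead_index n u q" "flat_coeff n u q = 1"
    and q: "q mod n = c mod n" "q \<le> c" and c': "c \<le> c'"
  defines "t \<equiv> monom (flat_coeff n h c) (c div n - q div n)"
  shows "flat_coeff n (h - t \<cdot>\<^sub>v u) c' = 0"
proof -
  have "flat_coeff n h c \<noteq> 0" using lh by (simp add: is_lead_index_def)
  then have t: "t \<noteq> 0" "lead_coeff t = flat_coeff n h c" "degree t = c div n - q div n"
    by (simp_all add: t_def degree_monom_eq)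
  have "q div n * n \<le> c div n * n" using div_le_mono[OF q(2)] by simp
  then have "degree t * n + q = c"
    unfolding t(3) diff_mult_distrib using q(1) div_mult_mod_eq[of q n] div_mult_mod_eq[of c n]
    by linarith
  then have tu: "is_lead_index n (t \<cdot>\<^sub>v u) c" "flat_coeff n (t \<cdot>\<^sub>v u) c = flat_coeff n h c"
    using is_lead_index_smult[OF u n lu(1) t(1)] lu(2) t(2) by auto
  have "flat_coeff n (h - t \<cdot>\<^sub>v u) c' = flat_coeff n h c' - flat_coeff n (t \<cdot>\<^sub>v u) c'"
    using h u n by (simp add: flat_coeff_diff)
  also have "\<dots> = 0"
  proof (cases "c' = c")
    case False
    with c' have "c < c'" by simp
    with lh tu(1) show ?thesis by (simp add: is_lead_index_def)
  qed (simp add: tu(2))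
  finally show ?thesis .
qed

lemma syz_in_lincomb:
  fixes a :: "'k::field poly vec" and u :: "nat \<Rightarrow> 'k poly vec"
  defines "n \<equiv> dim_vec a"
  assumes n: "n > 0"
    and syz: "\<And>j. j < m \<Longrightarrow> u j \<in> syz a"
    and lead: "\<And>j. j < m \<Longrightarrow> is_lead_index n (u j) (q j) \<and> flat_coeff n (u j) (q j) = 1"
    and dominated: "\<And>h c. h \<in> syz a \<Longrightarrow> is_lead_index n h c \<Longrightarrow>
      \<exists>j<m. q j mod n = c mod n \<and> q j \<le> c"
    and h: "h \<in> syz a"
  shows "\<exists>g. h = finsum_vec TYPE('k poly) n (\<lambda>j. g j \<cdot>\<^sub>v u j) {..<m}"
proof -
  have uc: "u j \<in> carrier_vec n" if "j < m" for j
    using syz_carrier[OF syz[OF that]] by (simp add: n_def)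
  have "\<exists>g. \<forall>i<n. h $ i = (\<Sum>j<m. g j * u j $ i)"
    if "h \<in> syz a" "\<And>c. b \<le> c \<Longrightarrow> flat_coeff n h c = 0" for b h
    using that
  proof (induction b arbitrary: h rule: less_induct)
    case (less b)
    have hc: "h \<in> carrier_vec n" using syz_carrier[OF less.prems(1)] by (simp add: n_def)
    show ?case
    proof (cases "h = 0\<^sub>v n")
      case True
      then show ?thesis by (intro exI[of _ "\<lambda>_. 0"]) simp
    next
      case False
      then obtain c where c: "is_lead_index n h c" using is_lead_index_exists[OF hc] by blast
      then have "c < b" using less.prems(2) not_le unfolding is_lead_index_def by blast
      obtain j where j: "j < m" "q j mod n = c mod n" "q j \<le> c"
        using dominated[OF less.prems(1) c] by blast
      define t where "t = monom (flat_coeff n h c) (c div n - q j div n)"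
      have "\<exists>g. \<forall>i<n. (h - t \<cdot>\<^sub>v u j) $ i = (\<Sum>j<m. g j * u j $ i)"
      proof (rule less.IH[OF \<open>c < b\<close>])
        show "h - t \<cdot>\<^sub>v u j \<in> syz a" using less.prems(1) syz[OF j(1)] by (rule syz_diff_smult)
        show "flat_coeff n (h - t \<cdot>\<^sub>v u j) c' = 0" if "c \<le> c'" for c'
          unfolding t_def using n hc uc[OF j(1)] c lead[OF j(1)] j(2,3) that
          by (intro lead_index_reduction) auto
      qed
      then obtain g where g: "\<forall>i<n. (h - t \<cdot>\<^sub>v u j) $ i = (\<Sum>j<m. g j * u j $ i)" by blast
      have "h $ i = (\<Sum>k<m. (g k + (if k = j then t else 0)) * u k $ i)" if "i < n" for i
      proof -
        have "(\<Sum>k<m. (if k = j then t else 0) * u k $ i) = t * u j $ i"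
          using j(1) by (subst sum_eq_single[of _ j]) auto
        then show ?thesis
          using g[rule_format, OF that] that hc uc[OF j(1)]
          by (simp add: distrib_right sum.distrib diff_eq_eq)
      qed
      then show ?thesis by (intro exI[of _ "\<lambda>k. g k + (if k = j then t else 0)"]) simp
    qed
  qed
  then obtain g where g: "\<forall>i<n. h $ i = (\<Sum>j<m. g j * u j $ i)"
    using h flat_coeff_eq_0[OF syz_carrier[OF h] n[unfolded n_def], folded n_def] by blast
  have "h = finsum_vec TYPE('k poly) n (\<lambda>j. g j \<cdot>\<^sub>v u j) {..<m}"
    using g syz_carrier[OF h] uc by (subst finsum_vec_smult_eq) (auto simp: n_def)
  then show ?thesis by blast
qed

lemma is_mu_basisI:
  fixes a :: "'k::field poly vec" and u :: "nat \<Rightarrow> 'k poly vec"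
  defines "n \<equiv> dim_vec a"
  assumes n: "n > 0"
    and syz: "\<And>j. j < n - 1 \<Longrightarrow> u j \<in> syz a"
    and lead: "\<And>j. j < n - 1 \<Longrightarrow> is_lead_index n (u j) (q j) \<and> flat_coeff n (u j) (q j) = 1"
    and inj: "inj_on (\<lambda>j. q j mod n) {..<n - 1}"
    and dominated: "\<And>h c. h \<in> syz a \<Longrightarrow> is_lead_index n h c \<Longrightarrow>
      \<exists>j<n - 1. q j mod n = c mod n \<and> q j \<le> c"
  shows "is_mu_basis a u"
proof -
  have uc: "u j \<in> carrier_vec n" if "j < n - 1" for j
    using syz_carrier[OF syz[OF that]] by (simp add: n_def)
  have "inj_on u {..<n - 1}"
  proof (rule inj_onI)
    fix i j assume "i \<in> {..<n - 1}" "j \<in> {..<n - 1}" "u i = u j"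
    with lead have "q i = q j" by (metis is_lead_index_unique lessThan_iff)
    with inj_onD[OF inj, of i j] \<open>i \<in> _\<close> \<open>j \<in> _\<close> show "i = j" by simp
  qed
  moreover have "u j \<noteq> 0\<^sub>v n" if "j < n - 1" for j
    using lead[OF that] n by auto
  moreover have "\<forall>j<n - 1. g j = 0"
    if "finsum_vec TYPE('k) n (\<lambda>j. g j \<cdot>\<^sub>v LV (u j)) {..<n - 1} = 0\<^sub>v n" for g
    using LV_lincomb_eq_zero_imp[OF n uc _ inj that] lead by blast
  moreover have "\<forall>j<n - 1. g j = 0"
    if "finsum_vec TYPE('k poly) n (\<lambda>j. g j \<cdot>\<^sub>v u j) {..<n - 1} = 0\<^sub>v n" for g
    using lincomb_eq_zero_imp[OF n uc _ inj that] lead by blast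
  moreover have "\<exists>g. h = finsum_vec TYPE('k poly) n (\<lambda>j. g j \<cdot>\<^sub>v u j) {..<n - 1}"
    if "h \<in> syz a" for h
    using syz_in_lincomb[where a=a and u=u and m="n - 1" and q=q and h=h, folded n_def]
      n syz lead dominated that by blast
  ultimately show ?thesis
    unfolding is_mu_basis_def Let_def n_def[symmetric] using uc syz by blast
qed

section \<open>Kernels and pivot columns\<close>

definition unflatten :: "nat \<Rightarrow> 'k::comm_monoid_add vec \<Rightarrow> 'k poly vec" where
  "unflatten n x = vec n (\<lambda>r. \<Sum>c<dim_vec x. if c mod n = r then monom (x $ c) (c div n) else 0)"

lemma unflatten_carrier [simp]: "unflatten n x \<in> carrier_vec n"
  by (simp add: unflatten_def)

lemma flat_coeff_unflatten:
  assumes "n > 0"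
  shows "flat_coeff n (unflatten n x) c = (if c < dim_vec x then x $ c else 0)"
proof -
  have "flat_coeff n (unflatten n x) c
      = (\<Sum>c'<dim_vec x. if c' mod n = c mod n \<and> c' div n = c div n then x $ c' else 0)"
    using assms unfolding flat_coeff_def unflatten_def
    by (auto simp: coeff_sum if_distrib[of "\<lambda>p. coeff p _"] intro!: sum.cong)
  also have "\<dots> = (\<Sum>c'<dim_vec x. if c' = c then x $ c' else 0)"
    by (intro sum.cong refl) (metis div_mult_mod_eq)
  finally show ?thesis by simp
qed

lemma unflatten_flat_coeff:
  assumes "n > 0" "h \<in> carrier_vec n" "\<And>c. N \<le> c \<Longrightarrow> flat_coeff n h c = 0"
  shows "unflatten n (vec N (flat_coeff n h)) = h"
  by (rule flat_coeff_eqI[OF unflatten_carrier assms(2)])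
    (use assms in \<open>simp add: flat_coeff_unflatten\<close>)

lemma coeff_monom_mod_div:
  "coeff (if c mod n = c' mod n then monom x (c div n) else 0) (c' div n) = (if c = c' then x else 0)"
proof (cases "c mod n = c' mod n")
  case True
  then have "c div n = c' div n \<longleftrightarrow> c = c'" by (metis div_mult_mod_eq)
  with True show ?thesis by simp
qed auto

lemma mult_mat_vec_nth:
  "i < dim_row B \<Longrightarrow> dim_vec x = dim_col B \<Longrightarrow>
    (B *\<^sub>v x) $ i = (\<Sum>j<dim_col B. B $$ (i, j) * x $ j)"
  by (simp add: scalar_prod_def lessThan_atLeast0 mult.commute)

lemma mult_mat_vec_nth_upto:
  assumes "i < dim_row B" "dim_vec x = dim_col B" "c < dim_col B"
    and "\<And>j. c < j \<Longrightarrow> j < dim_col B \<Longrightarrow> x $ j = 0"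
  shows "(B *\<^sub>v x) $ i = (\<Sum>j<c. B $$ (i, j) * x $ j) + B $$ (i, c) * x $ c"
proof -
  have "(B *\<^sub>v x) $ i = (\<Sum>j<Suc c. B $$ (i, j) * x $ j)"
    unfolding mult_mat_vec_nth[OF assms(1,2)] using assms(3,4)
    by (intro sum.mono_neutral_right) auto
  then show ?thesis by simp
qed

lemma finsum_vec_smult_col:
  fixes B :: "'a::comm_ring_1 mat"
  assumes "c \<le> dim_col B"
  shows "finsum_vec TYPE('a) (dim_row B) (\<lambda>j. f j \<cdot>\<^sub>v col B j) {..<c}
    = vec (dim_row B) (\<lambda>i. \<Sum>j<c. f j * B $$ (i, j))"
  using assms by (subst finsum_vec_smult_eq) (auto intro!: eq_vecI sum.cong)

lemma not_pivotal_iff_kernel: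
  fixes B :: "'k::field mat"
  assumes c: "c < dim_col B"
  shows "\<not> pivotal B c \<longleftrightarrow>
    (\<exists>x \<in> carrier_vec (dim_col B). B *\<^sub>v x = 0\<^sub>v (dim_row B) \<and> x $ c \<noteq> 0
      \<and> (\<forall>j. c < j \<and> j < dim_col B \<longrightarrow> x $ j = 0))"
proof
  assume "\<not> pivotal B c"
  then obtain f where f: "col B c = vec (dim_row B) (\<lambda>i. \<Sum>j<c. f j * B $$ (i, j))"
    using c unfolding pivotal_def finsum_vec_smult_col[OF less_imp_le[OF c]] by blast
  define x where "x = vec (dim_col B) (\<lambda>j. if j < c then f j else if j = c then -1 else 0)"
  have "B *\<^sub>v x = 0\<^sub>v (dim_row B)"
  proof (rule eq_vecI)
    fix i assume "i < dim_vec (0\<^sub>v (dim_row B) :: 'k vec)"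
    then have i: "i < dim_row B" by simp
    have "(B *\<^sub>v x) $ i = (\<Sum>j<c. B $$ (i, j) * f j) - B $$ (i, c)"
      using c by (subst mult_mat_vec_nth_upto[OF i _ c]) (auto simp: x_def)
    also have "B $$ (i, c) = (\<Sum>j<c. f j * B $$ (i, j))"
      using arg_cong[OF f, of "\<lambda>v. v $ i"] i c by simp
    finally show "(B *\<^sub>v x) $ i = 0\<^sub>v (dim_row B) $ i" using i by (simp add: mult.commute)
  qed simp
  then show "\<exists>x \<in> carrier_vec (dim_col B). B *\<^sub>v x = 0\<^sub>v (dim_row B) \<and> x $ c \<noteq> 0
      \<and> (\<forall>j. c < j \<and> j < dim_col B \<longrightarrow> x $ j = 0)"
    using c by (intro bexI[of _ x]) (auto simp: x_def)
next
  assume "\<exists>x \<in> carrier_vec (dim_col B). B *\<^sub>v x = 0\<^sub>v (dim_row B) \<and> x $ c \<noteq> 0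
      \<and> (\<forall>j. c < j \<and> j < dim_col B \<longrightarrow> x $ j = 0)"
  then obtain x where x: "x \<in> carrier_vec (dim_col B)" "B *\<^sub>v x = 0\<^sub>v (dim_row B)" "x $ c \<noteq> 0"
    "\<And>j. c < j \<Longrightarrow> j < dim_col B \<Longrightarrow> x $ j = 0" by blast
  have comb: "col B c = vec (dim_row B) (\<lambda>i. \<Sum>j<c. (- x $ j / x $ c) * B $$ (i, j))"
  proof (rule eq_vecI)
    fix i assume "i < dim_vec (vec (dim_row B) (\<lambda>i. \<Sum>j<c. (- x $ j / x $ c) * B $$ (i, j)))"
    then have i: "i < dim_row B" by simp
    have "0 = (\<Sum>j<c. B $$ (i, j) * x $ j) + B $$ (i, c) * x $ c"
      using arg_cong[OF x(2), of "\<lambda>v. v $ i"] mult_mat_vec_nth_upto[OF i _ c x(4)] x(1) i by simp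
    then show "col B c $ i = vec (dim_row B) (\<lambda>i. \<Sum>j<c. (- x $ j / x $ c) * B $$ (i, j)) $ i"
      using i c x(3)
      by (simp add: field_simps sum_divide_distrib[symmetric] sum_negf eq_neg_iff_add_eq_0)
  qed simp
  show "\<not> pivotal B c"
    unfolding pivotal_def finsum_vec_smult_col[OF less_imp_le[OF c]]
    using comb by (auto intro!: exI[of _ "\<lambda>j. - x $ j / x $ c"])
qed

lemma pivot_fun_strict_mono:
  assumes dim: "dim_row E = R" and p: "pivot_fun E f C"
  shows "i < j \<Longrightarrow> j < R \<Longrightarrow> f j < C \<Longrightarrow> f i < f j"
proof (induction j)
  case (Suc j)
  then have "f j < f (Suc j)" using pivot_funD(3)[OF dim p, of j] by auto
  with Suc show ?case by (cases "i = j") auto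
qed simp

lemma pivot_fun_kernel_pivot_entry:
  fixes E :: "'k::field mat"
  assumes E: "E \<in> carrier_mat R C" and p: "pivot_fun E f C" and i: "i < R" "f i < C"
    and x: "dim_vec x = C" "E *\<^sub>v x = 0\<^sub>v R" "\<And>j. f i < j \<Longrightarrow> j < C \<Longrightarrow> x $ j = 0"
  shows "x $ f i = 0"
proof -
  have dim: "dim_row E = R" using E by simp
  have "0 = (E *\<^sub>v x) $ i" using x(2) i by simp
  also have "\<dots> = (\<Sum>j<f i. E $$ (i, j) * x $ j) + E $$ (i, f i) * x $ f i"
    using E i x by (intro mult_mat_vec_nth_upto) auto
  also have "\<dots> = x $ f i"
    using pivot_funD(2,4)[OF dim p i(1)] i(2) by simp
  finally show ?thesis by simp
qed

lemma pivot_fun_kernel_vec: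
  fixes E :: "'k::field mat"
  assumes E: "E \<in> carrier_mat R C" and p: "pivot_fun E f C"
    and K1: "\<And>i. i < K \<Longrightarrow> i < R \<and> f i < C"
    and K2: "\<And>i. i < R \<Longrightarrow> K \<le> i \<Longrightarrow> f i = C"
    and c: "c < C" and nc: "\<And>i. i < K \<Longrightarrow> f i \<noteq> c"
  defines "x \<equiv> vec C (\<lambda>j. (if j = c then 1 else 0) - (\<Sum>i<K. if f i = j then E $$ (i, c) else 0))"
  shows "E *\<^sub>v x = 0\<^sub>v R" and "x $ c = 1" and "\<And>j. c < j \<Longrightarrow> j < C \<Longrightarrow> x $ j = 0"
proof -
  have dim: "dim_row E = R" using E by simp
  show "x $ c = 1" unfolding x_def using c nc by (simp add: sum.neutral)
  show "x $ j = 0" if j: "c < j" "j < C" for j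
  proof -
    have "(\<Sum>i<K. if f i = j then E $$ (i, c) else 0) = 0"
      using pivot_funD(2)[OF dim p] K1 j(1) by (intro sum.neutral) auto
    then show ?thesis unfolding x_def using j by simp
  qed
  show "E *\<^sub>v x = 0\<^sub>v R"
  proof (rule eq_vecI)
    fix i' assume "i' < dim_vec (0\<^sub>v R :: 'k vec)"
    then have i': "i' < R" by simp
    have Ex: "(E *\<^sub>v x) $ i' = (\<Sum>j<C. E $$ (i', j) * x $ j)"
      using mult_mat_vec_nth[of i' E x] E i' by (simp add: x_def)
    show "(E *\<^sub>v x) $ i' = 0\<^sub>v R $ i'"
    proof (cases "i' < K")
      case False
      then show ?thesis
        unfolding Ex using i' K2[OF i'] pivot_funD(2)[OF dim p i'] by simp
    next
      case True
      have "(E *\<^sub>v x) $ i' = (\<Sum>j<C. (if j = c then E $$ (i', j) else 0)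
          - (\<Sum>i<K. if f i = j then E $$ (i', j) * E $$ (i, c) else 0))"
        unfolding Ex by (unfold x_def, intro sum.cong refl)
          (simp add: right_diff_distrib sum_distrib_left if_distrib cong: if_cong)
      also have "\<dots> = E $$ (i', c)
          - (\<Sum>j<C. \<Sum>i<K. if f i = j then E $$ (i', j) * E $$ (i, c) else 0)"
        using c by (simp add: sum_subtractf)
      also have "(\<Sum>j<C. \<Sum>i<K. if f i = j then E $$ (i', j) * E $$ (i, c) else 0)
          = (\<Sum>i<K. E $$ (i', f i) * E $$ (i, c))"
        using K1 by (subst sum.swap) simp
      also have "\<dots> = E $$ (i', f i') * E $$ (i', c)"
        using pivot_funD(5)[OF dim p _ _ i'] K1 True by (intro sum_eq_single) auto
      also have "E $$ (i', f i') = 1" using pivot_funD(4)[OF dim p i'] K1[OF True] by simp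
      finally show ?thesis using i' by simp
    qed
  qed (use dim in simp)
qed

section \<open>The coefficient matrix\<close>

locale poly_row =
  fixes a :: "'k::field poly vec"
  assumes dim_pos: "dim_vec a > 0"
begin

abbreviation "n \<equiv> dim_vec a"
abbreviation "d \<equiv> vdeg a"
abbreviation "N \<equiv> n * (d + 1)"
abbreviation "A \<equiv> coeff_matrix a"

lemma coeff_matrix_carrier: "A \<in> carrier_mat (2 * d + 1) N"
  unfolding coeff_matrix_def Let_def by simp

lemma coeff_matrix_index:
  "i < 2 * d + 1 \<Longrightarrow> c < N \<Longrightarrow> A $$ (i, c) =
    (if c div n \<le> i \<and> i - c div n \<le> d then coeff (a $ (c mod n)) (i - c div n) else 0)"
  unfolding coeff_matrix_def Let_def by simp

lemma coeff_a_eq_0: "r < n \<Longrightarrow> d < k \<Longrightarrow> coeff (a $ r) k = 0"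
  using le_vdeg[of r a] by (intro coeff_eq_0) simp

lemma coeff_scalar_prod_unflatten:
  assumes x: "x \<in> carrier_vec N"
  shows "coeff (a \<bullet> unflatten n x) i = (\<Sum>c<N. if c div n \<le> i \<and> i - c div n \<le> d
      then coeff (a $ (c mod n)) (i - c div n) * x $ c else 0)"
proof -
  have "a \<bullet> unflatten n x = (\<Sum>r<n. \<Sum>c<N. if c mod n = r then a $ r * monom (x $ c) (c div n) else 0)"
    using x unfolding scalar_prod_def unflatten_def
    by (simp add: sum_distrib_left if_distrib lessThan_atLeast0 cong: if_cong)
  also have "\<dots> = (\<Sum>c<N. monom (x $ c) (c div n) * a $ (c mod n))"
    using dim_pos by (subst sum.swap) (simp add: mult.commute)
  finally have expand: "a \<bullet> unflatten n x = (\<Sum>c<N. monom (x $ c) (c div n) * a $ (c mod n))" .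
  show ?thesis
    unfolding expand coeff_sum coeff_monom_mult
    by (intro sum.cong refl) (use coeff_a_eq_0 dim_pos in auto)
qed

lemma coeff_matrix_mult_vec:
  assumes x: "x \<in> carrier_vec N" and i: "i < 2 * d + 1"
  shows "(A *\<^sub>v x) $ i = coeff (a \<bullet> unflatten n x) i"
proof -
  have "(A *\<^sub>v x) $ i = (\<Sum>c<N. A $$ (i, c) * x $ c)"
    using x i coeff_matrix_carrier by (auto simp: scalar_prod_def lessThan_atLeast0 intro!: sum.cong)
  then show ?thesis
    unfolding coeff_scalar_prod_unflatten[OF x] using i by (auto simp: coeff_matrix_index intro!: sum.cong)
qed

lemma coeff_scalar_prod_unflatten_high:
  assumes x: "x \<in> carrier_vec N" and i: "2 * d + 1 \<le> i"
  shows "coeff (a \<bullet> unflatten n x) i = 0"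
proof -
  have low: "c div n \<le> d" if "c < N" for c
    using that dim_pos by (simp add: less_Suc_eq_le[symmetric] div_less_iff_less_mult mult.commute)
  then show ?thesis
    unfolding coeff_scalar_prod_unflatten[OF x] using i by (intro sum.neutral) (fastforce dest: low)
qed

lemma unflatten_in_syz_iff:
  assumes x: "x \<in> carrier_vec N"
  shows "unflatten n x \<in> syz a \<longleftrightarrow> A *\<^sub>v x = 0\<^sub>v (2 * d + 1)"
proof -
  have "a \<bullet> unflatten n x = 0 \<longleftrightarrow> (\<forall>i < 2 * d + 1. coeff (a \<bullet> unflatten n x) i = 0)"
    using coeff_scalar_prod_unflatten_high[OF x] by (metis coeff_0 not_le poly_eqI)
  also have "\<dots> \<longleftrightarrow> A *\<^sub>v x = 0\<^sub>v (2 * d + 1)"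
    using coeff_matrix_carrier
    by (auto simp: vec_eq_iff coeff_matrix_mult_vec[OF x, symmetric] simp del: index_mult_mat_vec)
  finally show ?thesis by (simp add: syz_def)
qed

lemma nonpivots_iff_kernel:
  "c \<in> nonpivots A \<longleftrightarrow> c < N \<and> (\<exists>x \<in> carrier_vec N. A *\<^sub>v x = 0\<^sub>v (2 * d + 1) \<and> x $ c \<noteq> 0
      \<and> (\<forall>j. c < j \<and> j < N \<longrightarrow> x $ j = 0))"
  using not_pivotal_iff_kernel[of c A] coeff_matrix_carrier unfolding nonpivots_def by auto

lemma nonpivots_iff_syz_lead_index:
  "c \<in> nonpivots A \<longleftrightarrow> c < N \<and> (\<exists>h \<in> syz a. is_lead_index n h c)"
proof
  assume "c \<in> nonpivots A"
  then obtain x where x: "x \<in> carrier_vec N" "A *\<^sub>v x = 0\<^sub>v (2 * d + 1)" "x $ c \<noteq> 0"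
    "\<forall>j. c < j \<and> j < N \<longrightarrow> x $ j = 0" and c: "c < N"
    unfolding nonpivots_iff_kernel by blast
  have "unflatten n x \<in> syz a" using x(1,2) by (simp add: unflatten_in_syz_iff)
  moreover have "is_lead_index n (unflatten n x) c"
    using x c dim_pos by (auto simp: is_lead_index_def flat_coeff_unflatten)
  ultimately show "c < N \<and> (\<exists>h \<in> syz a. is_lead_index n h c)" using c by blast
next
  assume "c < N \<and> (\<exists>h \<in> syz a. is_lead_index n h c)"
  then obtain h where c: "c < N" and h: "h \<in> syz a" "is_lead_index n h c" by blast
  define x where "x = vec N (flat_coeff n h)"
  have "unflatten n x = h"
    unfolding x_def using h c dim_pos syz_carrier[OF h(1)]
    by (intro unflatten_flat_coeff) (auto simp: is_lead_index_def)
  then have "A *\<^sub>v x = 0\<^sub>v (2 * d + 1)" using h(1) unflatten_in_syz_iff[of x] by (simp add: x_def)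
  with c h(2) show "c \<in> nonpivots A"
    unfolding nonpivots_iff_kernel by (intro conjI bexI[of _ x]) (auto simp: x_def is_lead_index_def)
qed

definition rref :: "'k mat" where
  "rref = gauss_jordan_single A"

lemma rref_carrier: "rref \<in> carrier_mat (2 * d + 1) N"
  using gauss_jordan_single(2)[OF coeff_matrix_carrier] unfolding rref_def by simp

lemma rref_dim_row: "dim_row rref = 2 * d + 1"
  using rref_carrier by simp

lemma rref_kernel_iff:
  "x \<in> carrier_vec N \<Longrightarrow> rref *\<^sub>v x = 0\<^sub>v (2 * d + 1) \<longleftrightarrow> A *\<^sub>v x = 0\<^sub>v (2 * d + 1)"
  using gauss_jordan_single(1)[OF coeff_matrix_carrier refl] unfolding rref_def by simp

definition pivot_col :: "nat \<Rightarrow> nat" where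
  "pivot_col = (SOME f. pivot_fun rref f N)"

lemma pivot_fun_rref: "pivot_fun rref pivot_col N"
proof -
  have "row_echelon_form rref"
    using gauss_jordan_single(3)[OF coeff_matrix_carrier refl] unfolding rref_def by simp
  then have "\<exists>f. pivot_fun rref f N" unfolding row_echelon_form_def using rref_carrier by simp
  then show ?thesis unfolding pivot_col_def by (rule someI_ex)
qed

definition num_pivots :: nat where
  "num_pivots = (LEAST i. \<not> (i < 2 * d + 1 \<and> pivot_col i < N))"

lemma pivot_row: "i < num_pivots \<Longrightarrow> i < 2 * d + 1 \<and> pivot_col i < N"
  unfolding num_pivots_def using not_less_Least by blast

lemma non_pivot_row:
  assumes i: "i < 2 * d + 1" and "num_pivots \<le> i"
  shows "pivot_col i = N"
proof (rule ccontr)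
  have least: "\<not> (num_pivots < 2 * d + 1 \<and> pivot_col num_pivots < N)"
    unfolding num_pivots_def by (rule LeastI[of _ "2 * d + 1"]) simp
  assume "pivot_col i \<noteq> N"
  then have "pivot_col i < N" using pivot_funD(1)[OF rref_dim_row pivot_fun_rref i] by simp
  moreover have "pivot_col num_pivots < pivot_col i" if "num_pivots < i"
    using pivot_fun_strict_mono[OF rref_dim_row pivot_fun_rref that i] \<open>pivot_col i < N\<close> by simp
  ultimately have "pivot_col num_pivots < N"
    using \<open>num_pivots \<le> i\<close> by (cases "num_pivots = i") auto
  with least i \<open>num_pivots \<le> i\<close> show False by simp
qed

lemma pivotal_iff_pivot_col: "pivotal A c \<longleftrightarrow> (\<exists>i<num_pivots. pivot_col i = c)"
proof
  assume pv: "pivotal A c"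
  then have c: "c < N" using coeff_matrix_carrier unfolding pivotal_def by simp
  show "\<exists>i<num_pivots. pivot_col i = c"
  proof (rule ccontr)
    assume "\<not> (\<exists>i<num_pivots. pivot_col i = c)"
    then have "\<exists>x \<in> carrier_vec N. A *\<^sub>v x = 0\<^sub>v (2 * d + 1) \<and> x $ c \<noteq> 0
        \<and> (\<forall>j. c < j \<and> j < N \<longrightarrow> x $ j = 0)"
      using pivot_fun_kernel_vec[OF rref_carrier pivot_fun_rref pivot_row non_pivot_row c]
        rref_kernel_iff by (intro bexI) auto
    with c have "c \<in> nonpivots A" unfolding nonpivots_iff_kernel by blast
    with pv show False unfolding nonpivots_def by simp
  qed
next
  assume "\<exists>i<num_pivots. pivot_col i = c"
  then obtain i where i: "i < num_pivots" "pivot_col i = c" by blast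
  have "c \<notin> nonpivots A"
  proof
    assume "c \<in> nonpivots A"
    then obtain x where x: "x \<in> carrier_vec N" "A *\<^sub>v x = 0\<^sub>v (2 * d + 1)" "x $ c \<noteq> 0"
      "\<And>j. c < j \<Longrightarrow> j < N \<Longrightarrow> x $ j = 0" unfolding nonpivots_iff_kernel by blast
    have "x $ pivot_col i = 0"
      using pivot_row[OF i(1)] x rref_kernel_iff[OF x(1)] i(2)
      by (intro pivot_fun_kernel_pivot_entry[OF rref_carrier pivot_fun_rref]) auto
    with x(3) i(2) show False by simp
  qed
  then show "pivotal A c"
    unfolding nonpivots_def using pivot_row[OF i(1)] i(2) coeff_matrix_carrier by auto
qed

lemma pivots_eq: "pivots A = map pivot_col [0..<num_pivots]"
proof -
  have set: "{c. pivotal A c} = set (map pivot_col [0..<num_pivots])"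
    unfolding pivotal_iff_pivot_col by auto
  have "sorted_wrt (<) (map pivot_col [0..<num_pivots])"
    unfolding sorted_wrt_iff_nth_less
    using pivot_fun_strict_mono[OF rref_dim_row pivot_fun_rref] pivot_row by auto
  then show ?thesis
    unfolding pivots_def set by (rule strict_sorted_equal[OF _ strict_sorted_list_of_set]) simp
qed

definition kernel_vec :: "nat \<Rightarrow> 'k vec" where
  "kernel_vec c = vec N (\<lambda>j. (if j = c then 1 else 0)
     - (\<Sum>i<num_pivots. if pivot_col i = j then rref $$ (i, c) else 0))"

lemma kernel_vec:
  assumes "c \<in> nonpivots A"
  shows "A *\<^sub>v kernel_vec c = 0\<^sub>v (2 * d + 1)" "kernel_vec c $ c = 1"
    and "\<And>j. c < j \<Longrightarrow> j < N \<Longrightarrow> kernel_vec c $ j = 0"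
proof -
  have "c < N" "\<And>i. i < num_pivots \<Longrightarrow> pivot_col i \<noteq> c"
    using assms pivotal_iff_pivot_col coeff_matrix_carrier by (auto simp: nonpivots_def)
  note kv = pivot_fun_kernel_vec[where K = num_pivots,
      OF rref_carrier pivot_fun_rref pivot_row non_pivot_row this, folded kernel_vec_def]
  show "A *\<^sub>v kernel_vec c = 0\<^sub>v (2 * d + 1)" using kv(1) rref_kernel_iff by (simp add: kernel_vec_def)
  show "kernel_vec c $ c = 1" "\<And>j. c < j \<Longrightarrow> j < N \<Longrightarrow> kernel_vec c $ j = 0" using kv(2,3) by auto
qed

end

section \<open>The output of the algorithm\<close>

locale nonzero_poly_row = poly_row +
  assumes nonzero: "a \<noteq> 0\<^sub>v (dim_vec a)"
begin

definition lead_pos :: nat where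
  "lead_pos = (LEAST r. r < n \<and> a $ r \<noteq> 0 \<and> degree (a $ r) = d)"

lemma lead_pos_exists: "\<exists>r<n. a $ r \<noteq> 0 \<and> degree (a $ r) = d"
proof -
  obtain r where r: "r < n" "a $ r \<noteq> 0" using nonzero by (auto simp: vec_eq_iff)
  show ?thesis
  proof (cases "d = 0")
    case True
    with r le_vdeg[of r a] show ?thesis by auto
  next
    case False
    have "d \<in> insert 0 {degree (a $ i) |i. i < n}" unfolding vdeg_def by (rule Max_in) auto
    with False obtain i where "i < n" "degree (a $ i) = d" by auto
    with False show ?thesis by (intro exI[of _ i]) auto
  qed
qed

lemma lead_pos: "lead_pos < n" "a $ lead_pos \<noteq> 0" "degree (a $ lead_pos) = d"
  using LeastI_ex[OF lead_pos_exists] unfolding lead_pos_def by auto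

lemma coeff_before_lead_pos:
  assumes "r < lead_pos"
  shows "coeff (a $ r) d = 0"
proof -
  have "r < n" using assms lead_pos(1) by simp
  with not_less_Least[OF assms[unfolded lead_pos_def]] le_vdeg[of r a] show ?thesis
    by (cases "a $ r = 0") (auto simp: le_neq_implies_less coeff_eq_0)
qed

text \<open>If h had leading index k n + lead_pos, only position lead_pos would contribute to the
  coefficient of s^(d+k) in a \<bullet> h: earlier entries of a have degree below d, later entries
  of h degree below k.\<close>
lemma syz_lead_index_mod_ne_lead_pos:
  assumes h: "h \<in> syz a" and l: "is_lead_index n h c"
  shows "c mod n \<noteq> lead_pos"
proof
  assume cm: "c mod n = lead_pos"
  define k where "k = c div n"
  have c: "c = k * n + lead_pos" unfolding k_def cm[symmetric] by simp
  have hc: "h \<in> carrier_vec n" using syz_carrier[OF h] .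
  have term0: "coeff (a $ r) i * coeff (h $ r) (d + k - i) = 0"
    if r: "r < n" and i: "i \<le> d + k" and ne: "r \<noteq> lead_pos \<or> i \<noteq> d" for r i
  proof (rule ccontr)
    assume "coeff (a $ r) i * coeff (h $ r) (d + k - i) \<noteq> 0"
    then have a0: "coeff (a $ r) i \<noteq> 0" and h0: "flat_coeff n h ((d + k - i) * n + r) \<noteq> 0"
      by (auto simp: flat_coeff_mult_add[OF r])
    have "i \<le> d" using le_degree[OF a0] le_vdeg[of r a] r by simp
    have le: "(d + k - i) * n + r \<le> k * n + lead_pos"
      using h0 l unfolding c is_lead_index_def by (meson not_le)
    have "d + k - i \<le> k"
    proof (rule ccontr)
      assume "\<not> d + k - i \<le> k"
      then have "Suc k * n \<le> (d + k - i) * n" by (intro mult_le_mono1) simp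
      with le lead_pos(1) show False by simp
    qed
    with \<open>i \<le> d\<close> have "i = d" by simp
    with le ne have "r < lead_pos" by simp
    with a0 \<open>i = d\<close> coeff_before_lead_pos show False by simp
  qed
  have "coeff (a \<bullet> h) (d + k) = (\<Sum>r<n. \<Sum>i\<le>d + k. coeff (a $ r) i * coeff (h $ r) (d + k - i))"
    using hc by (simp add: scalar_prod_def coeff_sum coeff_mult lessThan_atLeast0)
  also have "\<dots> = (\<Sum>i\<le>d + k. coeff (a $ lead_pos) i * coeff (h $ lead_pos) (d + k - i))"
    using lead_pos(1) by (intro sum_eq_single) (auto intro!: sum.neutral simp: term0)
  also have "\<dots> = coeff (a $ lead_pos) d * coeff (h $ lead_pos) (d + k - d)"
    using lead_pos(1) by (intro sum_eq_single) (auto simp: term0)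
  also have "\<dots> \<noteq> 0"
    using leading_coeff_neq_0[OF lead_pos(2)] lead_pos(3) l flat_coeff_mult_add[OF lead_pos(1), of h k]
    unfolding c is_lead_index_def by simp
  finally show False using h unfolding syz_def by simp
qed

lemma koszul_syzygy_nonpivot:
  assumes r: "r < n" "r \<noteq> lead_pos"
  shows "d * n + r \<in> nonpivots A"
proof -
  define w where "w = vec n (\<lambda>i. if i = r then a $ lead_pos else if i = lead_pos then - a $ r else 0)"
  have "a \<bullet> w = (\<Sum>i<n. (if i = r then a $ i * a $ lead_pos else 0)
      + (if i = lead_pos then - (a $ i * a $ r) else 0))"
    unfolding scalar_prod_def w_def using r by (auto simp: lessThan_atLeast0 intro!: sum.cong)
  also have "\<dots> = 0" using r lead_pos(1) by (simp add: sum.distrib mult.commute)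
  finally have "w \<in> syz a" by (simp add: syz_def w_def)
  moreover have "is_lead_index n w (d * n + r)"
    unfolding is_lead_index_def
  proof (intro conjI allI impI)
    show "flat_coeff n w (d * n + r) \<noteq> 0"
      using r leading_coeff_neq_0[OF lead_pos(2)] lead_pos(3)
      by (simp add: flat_coeff_mult_add w_def)
  next
    fix c' assume c': "d * n + r < c'"
    define k r' where "k = c' div n" and "r' = c' mod n"
    have r': "r' < n" and c'_eq: "c' = k * n + r'" using dim_pos by (simp_all add: k_def r'_def)
    have "d \<le> k"
    proof (rule ccontr)
      assume "\<not> d \<le> k"
      then have "Suc k * n \<le> d * n" by (intro mult_le_mono1) simp
      with c' c'_eq r' show False by simp
    qed
    have coeff_w: "flat_coeff n w c' = (if r' = r then coeff (a $ lead_pos) k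
        else if r' = lead_pos then - coeff (a $ r) k else 0)"
      using r' unfolding c'_eq flat_coeff_mult_add[OF r'] by (simp add: w_def)
    show "flat_coeff n w c' = 0"
    proof (cases "k = d")
      case True
      with c' c'_eq have "r < r'" by simp
      with coeff_before_lead_pos[of r] True show ?thesis unfolding coeff_w by auto
    next
      case False
      with \<open>d \<le> k\<close> have "d < k" by simp
      with coeff_a_eq_0 r(1) lead_pos(1) show ?thesis unfolding coeff_w by simp
    qed
  qed
  moreover have "d * n + r < N" using r by simp
  ultimately show ?thesis unfolding nonpivots_iff_syz_lead_index by blast
qed

definition basic_set :: "nat set" where
  "basic_set = {x \<in> nonpivots A. \<forall>y \<in> nonpivots A. y mod n = x mod n \<longrightarrow> x \<le> y}"

lemma basic_nonpivots_eq: "basic_nonpivots A n = sorted_list_of_set basic_set"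
  unfolding basic_nonpivots_def basic_set_def ..

lemma nonpivots_less: "c \<in> nonpivots A \<Longrightarrow> c < N"
  using coeff_matrix_carrier unfolding nonpivots_def by auto

lemma finite_basic: "finite basic_set"
  by (rule finite_subset[of _ "{..<N}"]) (auto simp: basic_set_def dest: nonpivots_less)

lemma basic_below:
  assumes c: "c \<in> nonpivots A"
  shows "\<exists>y \<in> basic_set. y mod n = c mod n \<and> y \<le> c"
proof -
  define T where "T = {y \<in> nonpivots A. y mod n = c mod n}"
  have T: "finite T" "c \<in> T"
    using c by (auto simp: T_def intro: finite_subset[of _ "{..<N}"] dest: nonpivots_less)
  then have min: "Min T \<in> T" "\<And>y. y \<in> T \<Longrightarrow> Min T \<le> y" by (auto intro: Min_in)
  then have "Min T \<in> basic_set" by (auto simp: basic_set_def T_def)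
  with min T(2) show ?thesis by (auto simp: T_def)
qed

lemma basic_mod_inj: "inj_on (\<lambda>x. x mod n) basic_set"
  by (rule inj_onI) (auto simp: basic_set_def intro: antisym)

lemma basic_mod_image: "(\<lambda>x. x mod n) ` basic_set = {..<n} - {lead_pos}"
proof
  show "(\<lambda>x. x mod n) ` basic_set \<subseteq> {..<n} - {lead_pos}"
    using syz_lead_index_mod_ne_lead_pos dim_pos
    by (auto simp: basic_set_def nonpivots_iff_syz_lead_index)
  show "{..<n} - {lead_pos} \<subseteq> (\<lambda>x. x mod n) ` basic_set"
  proof
    fix r assume "r \<in> {..<n} - {lead_pos}"
    then have r: "r < n" "r \<noteq> lead_pos" by auto
    then obtain y where "y \<in> basic_set" "y mod n = (d * n + r) mod n"
      using basic_below[OF koszul_syzygy_nonpivot[OF r]] by blast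
    with r show "r \<in> (\<lambda>x. x mod n) ` basic_set" by (auto intro: image_eqI[of _ _ y])
  qed
qed

lemma length_basic_nonpivots: "length (basic_nonpivots A n) = n - 1"
proof -
  have "card basic_set = card ({..<n} - {lead_pos})"
    using basic_mod_image card_image[OF basic_mod_inj] by simp
  then show ?thesis using lead_pos(1) by (simp add: basic_nonpivots_eq)
qed

lemma basic_nonpivots_nth: "j < n - 1 \<Longrightarrow> basic_nonpivots A n ! j \<in> basic_set"
  using length_basic_nonpivots finite_basic nth_mem[of j "basic_nonpivots A n"]
  by (simp add: basic_nonpivots_eq)

lemma inj_on_basic_nonpivots_mod: "inj_on (\<lambda>j. basic_nonpivots A n ! j mod n) {..<n - 1}"
proof (rule inj_onI)
  fix i j assume ij: "i \<in> {..<n - 1}" "j \<in> {..<n - 1}"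
    and "basic_nonpivots A n ! i mod n = basic_nonpivots A n ! j mod n"
  then have "basic_nonpivots A n ! i = basic_nonpivots A n ! j"
    using inj_onD[OF basic_mod_inj] basic_nonpivots_nth by simp
  then show "i = j"
    using ij length_basic_nonpivots nth_eq_iff_index_eq[of "basic_nonpivots A n" i j]
    by (simp add: basic_nonpivots_eq)
qed

lemma syz_lead_index_dominated:
  assumes h: "h \<in> syz a" and l: "is_lead_index n h c"
  shows "\<exists>j<n - 1. basic_nonpivots A n ! j mod n = c mod n \<and> basic_nonpivots A n ! j \<le> c"
proof -
  have "\<exists>y \<in> basic_set. y mod n = c mod n \<and> y \<le> c"
  proof (cases "c < N")
    case True
    with h l show ?thesis by (intro basic_below) (auto simp: nonpivots_iff_syz_lead_index)
  next
    case False
    have r: "c mod n < n" "c mod n \<noteq> lead_pos"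
      using dim_pos syz_lead_index_mod_ne_lead_pos[OF h l] by simp_all
    obtain y where y: "y \<in> basic_set" "y mod n = (d * n + c mod n) mod n"
      using basic_below[OF koszul_syzygy_nonpivot[OF r]] by blast
    then have "y < N" by (auto simp: basic_set_def dest: nonpivots_less)
    with y False show ?thesis by (intro bexI[of _ y]) auto
  qed
  then obtain y where y: "y \<in> basic_set" "y mod n = c mod n" "y \<le> c" by blast
  then obtain j where "j < length (basic_nonpivots A n)" "basic_nonpivots A n ! j = y"
    using y(1) finite_basic in_set_conv_nth[of y "basic_nonpivots A n"]
    by (auto simp: basic_nonpivots_eq)
  with y length_basic_nonpivots show ?thesis by auto
qed

lemma col_mu_basis_alg:
  assumes j: "j < n - 1"
  shows "col (mu_basis_alg a) j = unflatten n (kernel_vec (basic_nonpivots A n ! j))"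
proof (rule flat_coeff_eqI)
  define q where "q = basic_nonpivots A n ! j"
  have q: "q < N" using basic_nonpivots_nth[OF j] by (auto simp: q_def basic_set_def dest: nonpivots_less)
  fix c
  have entry: "col (mu_basis_alg a) j $ (c mod n)
      = (if q mod n = c mod n then monom 1 (q div n) else 0)
      - (\<Sum>i<num_pivots. if pivot_col i mod n = c mod n
          then monom (rref $$ (i, q)) (pivot_col i div n) else 0)"
    using j dim_pos unfolding mu_basis_alg_def Let_def pivots_eq rref_def[symmetric]
    by (auto simp: q_def intro!: sum.cong)
  have "flat_coeff n (col (mu_basis_alg a) j) c = (if q = c then 1 else 0)
      - (\<Sum>i<num_pivots. if pivot_col i = c then rref $$ (i, q) else 0)"
    unfolding flat_coeff_def entry coeff_diff coeff_sum coeff_monom_mod_div ..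
  also have "\<dots> = (if c < N then kernel_vec q $ c else 0)"
    using q pivot_row by (auto simp: kernel_vec_def intro!: sum.neutral)
  also have "\<dots> = flat_coeff n (unflatten n (kernel_vec q)) c"
    using dim_pos by (simp add: flat_coeff_unflatten kernel_vec_def)
  finally show "flat_coeff n (col (mu_basis_alg a) j) c
      = flat_coeff n (unflatten n (kernel_vec (basic_nonpivots A n ! j))) c"
    by (simp add: q_def)
qed (simp_all add: mu_basis_alg_def Let_def col_def)

lemma col_mu_basis_alg_syz_lead:
  assumes j: "j < n - 1"
  shows "col (mu_basis_alg a) j \<in> syz a
    \<and> is_lead_index n (col (mu_basis_alg a) j) (basic_nonpivots A n ! j)
    \<and> flat_coeff n (col (mu_basis_alg a) j) (basic_nonpivots A n ! j) = 1"
proof -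
  define q where "q = basic_nonpivots A n ! j"
  have q: "q \<in> nonpivots A" using basic_nonpivots_nth[OF j] by (simp add: q_def basic_set_def)
  then have "q < N" by (rule nonpivots_less)
  moreover have "unflatten n (kernel_vec q) \<in> syz a"
    using kernel_vec(1)[OF q] by (simp add: unflatten_in_syz_iff kernel_vec_def)
  ultimately show ?thesis
    using kernel_vec(2,3)[OF q] dim_pos unfolding col_mu_basis_alg[OF j] q_def[symmetric]
    by (auto simp: is_lead_index_def flat_coeff_unflatten kernel_vec_def)
qed

end

theorem theorem2:
  fixes a :: "'k::field poly vec"
  assumes "dim_vec a > 1"
    and "a \<noteq> 0\<^sub>v (dim_vec a)"
  shows "is_mu_basis a (\<lambda>j. col (mu_basis_alg a) j)"
proof -
  interpret nonzero_poly_row a using assms by unfold_locales auto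
  show ?thesis
    using dim_pos col_mu_basis_alg_syz_lead inj_on_basic_nonpivots_mod syz_lead_index_dominated
    by (intro is_mu_basisI[where q = "\<lambda>j. basic_nonpivots A n ! j"]) auto
qed

end
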